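(* Let $\Gamma$ be a maximal consistent set of SBTrust, $\delta$ a propositional formula, and $(\Delta,\varphi,i)\in S_\Gamma$. Then (a) if $(\Delta,\varphi,i)\in\mathit{max}([\delta]_\Gamma)$, then $\Delta$ is $\delta$-likely for $\Gamma$; (b) if $\Delta$ is $\delta$-likely for $\Gamma$, then $(\Delta,\delta,i)\in\mathit{max}([\delta]_\Gamma)$.
   Context: $\mathcal{L}_T$: $\alpha::=\varphi\mid\varphi\rightsquigarrow\varphi\mid B(\alpha)\mid\alpha*\alpha\mid\neg\alpha$, with $\varphi$ ranging over classical propositional formulas (set $\mathcal{L}_{CL}$) and $*\in\{\land,\lor,\to,\leftrightarrow\}$. SBTrust is the Hilbert system ($\varphi,\psi,\chi,\varphi_i,\psi_i$ propositional; $\alpha,\beta\in\mathcal{L}_T$; rule outputs in $\mathcal{L}_T$): classical tautologies and Modus Ponens; $\varphi\rightsquigarrow\varphi$; $(\varphi\rightsquigarrow\bot)\to\neg\varphi$; $((\psi\land\chi)\rightsquigarrow\varphi)\to(\psi\rightsquigarrow(\chi\to\varphi))$; $(\neg(\varphi\leftrightarrow\psi)\rightsquigarrow\bot)\to((\varphi\rightsquigarrow\chi)\leftrightarrow(\psi\rightsquigarrow\chi))$; rule RCK: from $(\varphi_1\land\dots\land\varphi_n)\to\varphi_{n+1}$ infer $\bigwedge_{j\le n}(\psi\rightsquigarrow\varphi_j)\to(\psi\rightsquigarrow\varphi_{n+1})$; rule $\mathbf{S5_F}$: from $(\ell_1\land\dots\land\ell_n)\to\chi$ infer $(\ell_1\land\dots\land\ell_n)\to(\neg\chi\rightsquigarrow\bot)$,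 each $\ell_j$ being $\varphi_j\rightsquigarrow\psi_j$ or its negation, $\chi$ propositional; $B(\alpha\to\beta)\to(B\alpha\to B\beta)$; $B\alpha\to\neg B\neg\alpha$; $B\alpha\to BB\alpha$; necessitation for $B$. A maximal consistent set (MCS) is $\Gamma\subseteq\mathcal{L}_T$ with $\Gamma\nvdash\bot$ and, for each $\alpha$, $\alpha\in\Gamma$ or $\neg\alpha\in\Gamma$. For MCSs, $\Gamma\leftrightsquigarrow\Delta$ iff they contain the same formulas of the form $\chi\rightsquigarrow\psi$; $[\Gamma]_\leftrightsquigarrow$ is the equivalence class. $\rightsquigarrow_\varphi(\Gamma)=\{\psi:\varphi\rightsquigarrow\psi\in\Gamma\}$, and $\Delta$ is $\varphi$-likely for $\Gamma$ if $\rightsquigarrow_\varphi(\Gamma)\subseteq\Delta$. Let $S_\Gamma=[\Gamma]_\leftrightsquigarrow\times\mathcal{L}_{CL}\times\{0,1,2\}$ and $[\delta]_\Gamma=\{(\Delta,\varphi,i)\in S_\Gamma:\delta\in\Delta\}$. Define $\succeq_\Gamma\subseteq S_\Gamma\times S_\Gamma$ by: $(\Delta,\varphi,i)\succeq_\Gamma(\Omega,\psi,j)$ iff ($\Delta$ is $\varphi$-likely for $\Gamma$ and $\varphi\in\Omega$) or ($i=1,j=0$) or ($i=2,j=1$) or ($i=0,j=2$). For $X\subseteq S_\Gamma$, $\mathit{max}(X)=\{x\in X:\forall y\in X\,(y\succeq_\Gamma x\Rightarrow x\succeq_\Gamma y)\}$. *)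

theory Defs
  imports Main
begin

text \<open>One datatype for all formulas; propositional formulas (L_CL) and
  formulas of L_T are carved out by predicates.  Cond phi psi is phi ~> psi,
  Bel alpha is B(alpha).\<close>

datatype 'a fm =
    Atom 'a
  | Bot
  | Not "'a fm"
  | And "'a fm" "'a fm"
  | Or "'a fm" "'a fm"
  | Imp "'a fm" "'a fm"
  | Iff "'a fm" "'a fm"
  | Cond "'a fm" "'a fm"
  | Bel "'a fm"

fun is_prop :: "'a fm \<Rightarrow> bool" where
  "is_prop (Atom a) = True"
| "is_prop Bot = True"
| "is_prop (Not p) = is_prop p"
| "is_prop (And p q) = (is_prop p \<and> is_prop q)"
| "is_prop (Or p q) = (is_prop p \<and> is_prop q)"
| "is_prop (Imp p q) = (is_prop p \<and> is_prop q)"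
| "is_prop (Iff p q) = (is_prop p \<and> is_prop q)"
| "is_prop (Cond p q) = False"
| "is_prop (Bel p) = False"

fun wf :: "'a fm \<Rightarrow> bool" where
  "wf (Atom a) = True"
| "wf Bot = True"
| "wf (Not p) = wf p"
| "wf (And p q) = (wf p \<and> wf q)"
| "wf (Or p q) = (wf p \<and> wf q)"
| "wf (Imp p q) = (wf p \<and> wf q)"
| "wf (Iff p q) = (wf p \<and> wf q)"
| "wf (Cond p q) = (is_prop p \<and> is_prop q)"
| "wf (Bel p) = wf p"

fun eval :: "('a fm \<Rightarrow> bool) \<Rightarrow> 'a fm \<Rightarrow> bool" where
  "eval v (Atom a) = v (Atom a)"
| "eval v Bot = False"
| "eval v (Not p) = (\<not> eval v p)"
| "eval v (And p q) = (eval v p \<and> eval v q)"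
| "eval v (Or p q) = (eval v p \<or> eval v q)"
| "eval v (Imp p q) = (eval v p \<longrightarrow> eval v q)"
| "eval v (Iff p q) = (eval v p \<longleftrightarrow> eval v q)"
| "eval v (Cond p q) = v (Cond p q)"
| "eval v (Bel p) = v (Bel p)"

definition tautology :: "'a fm \<Rightarrow> bool" where
  "tautology \<alpha> \<longleftrightarrow> (\<forall>v. eval v \<alpha>)"

fun conj_list :: "'a fm list \<Rightarrow> 'a fm" where
  "conj_list [] = Not Bot"
| "conj_list [x] = x"
| "conj_list (x # xs) = And x (conj_list xs)"

definition is_lit :: "'a fm \<Rightarrow> bool" where
  "is_lit l \<longleftrightarrow> (\<exists>p q. is_prop p \<and> is_prop q \<and> (l = Cond p q \<or> l = Not (Cond p q)))"

inductive derivable :: "'a fm \<Rightarrow> bool" ("\<turnstile> _" [40] 40) where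
  taut: "wf \<alpha> \<Longrightarrow> tautology \<alpha> \<Longrightarrow> \<turnstile> \<alpha>"
| mp: "\<turnstile> \<alpha> \<Longrightarrow> \<turnstile> Imp \<alpha> \<beta> \<Longrightarrow> \<turnstile> \<beta>"
| refl: "is_prop \<phi> \<Longrightarrow> \<turnstile> Cond \<phi> \<phi>"
| bot: "is_prop \<phi> \<Longrightarrow> \<turnstile> Imp (Cond \<phi> Bot) (Not \<phi>)"
| shift: "is_prop \<phi> \<Longrightarrow> is_prop \<psi> \<Longrightarrow> is_prop \<chi> \<Longrightarrow>
     \<turnstile> Imp (Cond (And \<psi> \<chi>) \<phi>) (Cond \<psi> (Imp \<chi> \<phi>))"
| lle: "is_prop \<phi> \<Longrightarrow> is_prop \<psi> \<Longrightarrow> is_prop \<chi> \<Longrightarrow>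
     \<turnstile> Imp (Cond (Not (Iff \<phi> \<psi>)) Bot) (Iff (Cond \<phi> \<chi>) (Cond \<psi> \<chi>))"
| RCK: "\<phi>s \<noteq> [] \<Longrightarrow> \<forall>p\<in>set \<phi>s. is_prop p \<Longrightarrow> is_prop \<phi>' \<Longrightarrow> is_prop \<psi> \<Longrightarrow>
     \<turnstile> Imp (conj_list \<phi>s) \<phi>' \<Longrightarrow>
     \<turnstile> Imp (conj_list (map (Cond \<psi>) \<phi>s)) (Cond \<psi> \<phi>')"
| S5F: "ls \<noteq> [] \<Longrightarrow> \<forall>l\<in>set ls. is_lit l \<Longrightarrow> is_prop \<chi> \<Longrightarrow>
     \<turnstile> Imp (conj_list ls) \<chi> \<Longrightarrow>
     \<turnstile> Imp (conj_list ls) (Cond (Not \<chi>) Bot)"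
| K: "wf \<alpha> \<Longrightarrow> wf \<beta> \<Longrightarrow> \<turnstile> Imp (Bel (Imp \<alpha> \<beta>)) (Imp (Bel \<alpha>) (Bel \<beta>))"
| D: "wf \<alpha> \<Longrightarrow> \<turnstile> Imp (Bel \<alpha>) (Not (Bel (Not \<alpha>)))"
| Four: "wf \<alpha> \<Longrightarrow> \<turnstile> Imp (Bel \<alpha>) (Bel (Bel \<alpha>))"
| Nec: "\<turnstile> \<alpha> \<Longrightarrow> \<turnstile> Bel \<alpha>"

fun imps :: "'a fm list \<Rightarrow> 'a fm \<Rightarrow> 'a fm" where
  "imps [] \<alpha> = \<alpha>"
| "imps (x # xs) \<alpha> = Imp x (imps xs \<alpha>)"

definition derives :: "'a fm set \<Rightarrow> 'a fm \<Rightarrow> bool" where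
  "derives \<Gamma> \<alpha> \<longleftrightarrow> (\<exists>xs. set xs \<subseteq> \<Gamma> \<and> (\<turnstile> imps xs \<alpha>))"

definition MCS :: "'a fm set \<Rightarrow> bool" where
  "MCS \<Gamma> \<longleftrightarrow> \<Gamma> \<subseteq> {\<alpha>. wf \<alpha>} \<and> \<not> derives \<Gamma> Bot \<and>
     (\<forall>\<alpha>. wf \<alpha> \<longrightarrow> \<alpha> \<in> \<Gamma> \<or> Not \<alpha> \<in> \<Gamma>)"

definition cond_equiv :: "'a fm set \<Rightarrow> 'a fm set \<Rightarrow> bool" where
  "cond_equiv \<Gamma> \<Delta> \<longleftrightarrow> (\<forall>\<chi> \<psi>. Cond \<chi> \<psi> \<in> \<Gamma> \<longleftrightarrow> Cond \<chi> \<psi> \<in> \<Delta>)"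

definition cond_class :: "'a fm set \<Rightarrow> 'a fm set set" where
  "cond_class \<Gamma> = {\<Delta>. MCS \<Delta> \<and> cond_equiv \<Gamma> \<Delta>}"

definition cons_of :: "'a fm \<Rightarrow> 'a fm set \<Rightarrow> 'a fm set" where
  "cons_of \<phi> \<Gamma> = {\<psi>. Cond \<phi> \<psi> \<in> \<Gamma>}"

definition likely :: "'a fm set \<Rightarrow> 'a fm \<Rightarrow> 'a fm set \<Rightarrow> bool" where
  "likely \<Gamma> \<phi> \<Delta> \<longleftrightarrow> cons_of \<phi> \<Gamma> \<subseteq> \<Delta>"

definition S :: "'a fm set \<Rightarrow> ('a fm set \<times> 'a fm \<times> nat) set" where
  "S \<Gamma> = {(\<Delta>, \<phi>, i). \<Delta> \<in> cond_class \<Gamma> \<and> is_prop \<phi> \<and> i \<in> {0, 1, 2}}"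

definition extent :: "'a fm set \<Rightarrow> 'a fm \<Rightarrow> ('a fm set \<times> 'a fm \<times> nat) set" where
  "extent \<Gamma> \<delta> = {(\<Delta>, \<phi>, i) \<in> S \<Gamma>. \<delta> \<in> \<Delta>}"

definition pref :: "'a fm set \<Rightarrow> ('a fm set \<times> 'a fm \<times> nat) \<Rightarrow> ('a fm set \<times> 'a fm \<times> nat) \<Rightarrow> bool" where
  "pref \<Gamma> x y \<longleftrightarrow> (case x of (\<Delta>, \<phi>, i) \<Rightarrow> case y of (\<Omega>, \<psi>, j) \<Rightarrow>
      (likely \<Gamma> \<phi> \<Delta> \<and> \<phi> \<in> \<Omega>) \<or> (i = 1 \<and> j = 0) \<or> (i = 2 \<and> j = 1) \<or> (i = 0 \<and> j = 2))"

definition maxel :: "'a fm set \<Rightarrow> ('a fm set \<times> 'a fm \<times> nat) set \<Rightarrow> ('a fm set \<times> 'a fm \<times> nat) set" where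
  "maxel \<Gamma> X = {x \<in> X. \<forall>y\<in>X. pref \<Gamma> y x \<longrightarrow> pref \<Gamma> x y}"

end

theory Submission
  imports Defs
begin

text \<open>Part (b) is immediate: \<delta> \<leadsto> \<delta> puts \<delta> into every \<delta>-likely \<Delta>, and an element
  (\<Delta>, \<delta>, i) with \<Delta> \<delta>-likely is preferred to every element of [\<delta>]. For part (a),
  comparing a maximal (\<Delta>, \<phi>, i) with (\<Omega>, \<phi>, i + 1 mod 3) shows that \<Delta> is \<phi>-likely and
  that \<phi> holds in every \<Omega> \<in> [\<Gamma>] containing \<delta>. By the canonical-model argument (Lindenbaum
  plus rule S5F) \<delta> \<rightarrow> \<phi> is then necessary in \<Gamma>, i.e. \<not>(\<delta> \<rightarrow> \<phi>) \<leadsto> \<bottom> \<in> \<Gamma>, and the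
  axioms LLE and Shift turn every \<delta> \<leadsto> \<chi> \<in> \<Gamma> into \<phi> \<leadsto> (\<delta> \<rightarrow> \<chi>) \<in> \<Gamma>, so \<chi> \<in> \<Delta>.\<close>

abbreviation Box :: "'a fm \<Rightarrow> 'a fm" where
  "Box \<chi> \<equiv> Cond (Not \<chi>) Bot"

lemma is_prop_imp_wf: "is_prop p \<Longrightarrow> wf p"
  by (induction p) auto

lemma is_lit_imp_wf: "is_lit l \<Longrightarrow> wf l"
  unfolding is_lit_def using is_prop_imp_wf by auto

lemma wf_conj_list: "xs \<noteq> [] \<Longrightarrow> wf (conj_list xs) = (\<forall>x\<in>set xs. wf x)"
  by (induction xs rule: conj_list.induct) auto

lemma eval_conj_list: "eval v (conj_list xs) = (\<forall>x\<in>set xs. eval v x)"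
  by (induction xs rule: conj_list.induct) auto

lemma wf_imps: "wf (imps xs a) = ((\<forall>x\<in>set xs. wf x) \<and> wf a)"
  by (induction xs) auto

lemma eval_imps: "eval v (imps xs a) = ((\<forall>x\<in>set xs. eval v x) \<longrightarrow> eval v a)"
  by (induction xs) auto

lemma derivable_imp_wf: "\<turnstile> a \<Longrightarrow> wf a"
proof (induction rule: derivable.induct)
  case (RCK \<phi>s \<phi>' \<psi>)
  then show ?case using is_prop_imp_wf by (auto simp: wf_conj_list)
next
  case (S5F ls \<chi>)
  then show ?case using is_prop_imp_wf is_lit_imp_wf by (auto simp: wf_conj_list)
qed (auto simp: is_prop_imp_wf)

lemma derivable_by_taut:
  assumes "\<turnstile> a" and "wf b" and "\<And>v. eval v a \<Longrightarrow> eval v b"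
  shows "\<turnstile> b"
proof (rule derivable.mp[OF assms(1)])
  show "\<turnstile> Imp a b"
    using derivable_imp_wf[OF assms(1)] assms(2,3)
    by (intro derivable.taut) (auto simp: tautology_def)
qed

lemma derivable_by_taut2:
  assumes a: "\<turnstile> a" and b: "\<turnstile> b" and "wf c"
    and "\<And>v. eval v a \<Longrightarrow> eval v b \<Longrightarrow> eval v c"
  shows "\<turnstile> c"
proof -
  have "\<turnstile> Imp b c"
    using assms derivable_imp_wf[OF b] by (intro derivable_by_taut[OF a]) auto
  with b show ?thesis by (rule derivable.mp)
qed

lemma S5F_imps:
  assumes "ls \<noteq> []" and "\<forall>l\<in>set ls. is_lit l" and "is_prop \<chi>" and "\<turnstile> imps ls \<chi>"
  shows "\<turnstile> imps ls (Box \<chi>)"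
proof -
  have wf_ls: "\<forall>l\<in>set ls. wf l"
    using assms(2) is_lit_imp_wf by blast
  have "\<turnstile> Imp (conj_list ls) \<chi>"
    using assms(1,3) wf_ls is_prop_imp_wf
    by (intro derivable_by_taut[OF assms(4)]) (auto simp: wf_conj_list eval_conj_list eval_imps)
  then have S5F: "\<turnstile> Imp (conj_list ls) (Box \<chi>)"
    using assms by (intro derivable.S5F)
  show ?thesis
    using assms(3) wf_ls is_prop_imp_wf
    by (intro derivable_by_taut[OF S5F]) (auto simp: wf_imps eval_conj_list eval_imps)
qed

lemma derives_derivable: "\<turnstile> a \<Longrightarrow> derives X a"
  unfolding derives_def by (intro exI[of _ "[]"]) simp

lemma derives_mem:
  assumes "a \<in> X" and "wf a"
  shows "derives X a"
  unfolding derives_def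
  using assms by (intro exI[of _ "[a]"]) (auto intro!: derivable.taut simp: tautology_def)

lemma derives_imp_wf: "derives X a \<Longrightarrow> wf a"
  unfolding derives_def by (auto dest: derivable_imp_wf simp: wf_imps)

lemma derives_by_taut2:
  assumes "derives X a" and "derives X b" and "wf c"
    and "\<And>v. eval v a \<Longrightarrow> eval v b \<Longrightarrow> eval v c"
  shows "derives X c"
proof -
  obtain xs ys where xs: "set xs \<subseteq> X" "\<turnstile> imps xs a" and ys: "set ys \<subseteq> X" "\<turnstile> imps ys b"
    using assms(1,2) unfolding derives_def by blast
  have "\<turnstile> imps (xs @ ys) c"
  proof (rule derivable_by_taut2[OF xs(2) ys(2)])
    show "wf (imps (xs @ ys) c)"
      using assms(3) derivable_imp_wf[OF xs(2)] derivable_imp_wf[OF ys(2)] by (auto simp: wf_imps)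
    show "eval v (imps (xs @ ys) c)" if "eval v (imps xs a)" and "eval v (imps ys b)" for v
      using that assms(4)[of v] by (simp add: eval_imps)
  qed
  then show ?thesis
    unfolding derives_def using xs(1) ys(1) by (intro exI[of _ "xs @ ys"]) auto
qed

lemma derives_by_taut:
  assumes "derives X a" and "wf b" and "\<And>v. eval v a \<Longrightarrow> eval v b"
  shows "derives X b"
  using assms derives_by_taut2[of X a a b] by blast

lemma derives_insert_imp:
  assumes "derives (insert a X) c" and "wf a"
  shows "derives X (Imp a c)"
proof -
  obtain xs where xs: "set xs \<subseteq> insert a X" "\<turnstile> imps xs c"
    using assms(1) unfolding derives_def by blast
  let ?ys = "filter (\<lambda>x. x \<noteq> a) xs"
  have "\<turnstile> imps ?ys (Imp a c)"
    using assms(2) derivable_imp_wf[OF xs(2)]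
    by (intro derivable_by_taut[OF xs(2)]) (auto simp: wf_imps eval_imps)
  then show ?thesis
    unfolding derives_def using xs(1) by (intro exI[of _ ?ys]) auto
qed

lemma MCS_wf: "MCS G \<Longrightarrow> a \<in> G \<Longrightarrow> wf a"
  unfolding MCS_def by blast

lemma MCS_not_both:
  assumes G: "MCS G" and "a \<in> G" and "Not a \<in> G"
  shows False
proof -
  have "derives G Bot"
    by (rule derives_by_taut2[OF derives_mem[OF assms(2)] derives_mem[OF assms(3)]])
      (use assms(2,3) MCS_wf[OF G] in auto)
  with G show False
    unfolding MCS_def by blast
qed

lemma MCS_derives_mem:
  assumes G: "MCS G" and a: "derives G a"
  shows "a \<in> G"
proof (rule ccontr)
  assume "a \<notin> G"
  then have "Not a \<in> G"
    using G derives_imp_wf[OF a] unfolding MCS_def by blast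
  then have "derives G Bot"
    by (rule derives_by_taut2[OF a derives_mem])
      (use G derives_imp_wf[OF a] in \<open>auto dest: MCS_wf\<close>)
  with G show False
    unfolding MCS_def by blast
qed

lemma MCS_derivable_mem: "MCS G \<Longrightarrow> \<turnstile> a \<Longrightarrow> a \<in> G"
  by (rule MCS_derives_mem) (auto intro: derives_derivable)

lemma MCS_closed_taut2:
  assumes G: "MCS G" and "a \<in> G" and "b \<in> G" and "wf c"
    and "\<And>v. eval v a \<Longrightarrow> eval v b \<Longrightarrow> eval v c"
  shows "c \<in> G"
proof -
  have "derives G c"
    by (rule derives_by_taut2[OF derives_mem[OF assms(2)] derives_mem[OF assms(3)]])
      (use assms MCS_wf[OF G] in auto)
  with G show ?thesis
    by (rule MCS_derives_mem)
qed

lemma MCS_derivable_mp: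
  assumes G: "MCS G" and ab: "\<turnstile> Imp a b" and "a \<in> G"
  shows "b \<in> G"
  using derivable_imp_wf[OF ab]
  by (intro MCS_closed_taut2[OF G \<open>a \<in> G\<close> MCS_derivable_mem[OF G ab]]) auto

lemma MCS_Imp_iff:
  assumes G: "MCS G" and "wf a" and "wf b"
  shows "Imp a b \<in> G \<longleftrightarrow> (a \<in> G \<longrightarrow> b \<in> G)"
proof
  show "Imp a b \<in> G \<Longrightarrow> a \<in> G \<longrightarrow> b \<in> G"
    using MCS_closed_taut2[OF G, of a "Imp a b" b] assms by auto
next
  assume "a \<in> G \<longrightarrow> b \<in> G"
  then have "b \<in> G \<or> Not a \<in> G"
    using G assms unfolding MCS_def by blast
  then show "Imp a b \<in> G"
    using MCS_closed_taut2[OF G, of b b "Imp a b"] MCS_closed_taut2[OF G, of "Not a" "Not a" "Imp a b"]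
      assms by auto
qed

lemma MCS_Iff_mem:
  assumes G: "MCS G" and ab: "Iff a b \<in> G" and "b \<in> G"
  shows "a \<in> G"
  using MCS_wf[OF G ab] by (intro MCS_closed_taut2[OF G ab \<open>b \<in> G\<close>]) auto

lemma lindenbaum:
  assumes "H \<subseteq> {a. wf a}" and "\<not> derives H Bot"
  shows "\<exists>M. MCS M \<and> H \<subseteq> M"
proof -
  define A where "A = {X. H \<subseteq> X \<and> X \<subseteq> {a. wf a} \<and> \<not> derives X Bot}"
  have "\<exists>M\<in>A. \<forall>X\<in>A. M \<subseteq> X \<longrightarrow> X = M"
  proof (rule subset_Zorn_nonempty)
    show "A \<noteq> {}"
      using assms unfolding A_def by blast
  next
    fix C assume C: "C \<noteq> {}" "subset.chain A C"
    then have "C \<subseteq> A"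
      unfolding subset.chain_def by blast
    have "\<not> derives (\<Union>C) Bot"
    proof
      assume "derives (\<Union>C) Bot"
      then obtain xs where xs: "set xs \<subseteq> \<Union>C" "\<turnstile> imps xs Bot"
        unfolding derives_def by blast
      obtain B where "B \<in> C" "set xs \<subseteq> B"
        using finite_subset_Union_chain[OF _ xs(1) C] by blast
      then show False
        using xs(2) \<open>C \<subseteq> A\<close> unfolding A_def derives_def by blast
    qed
    then show "\<Union>C \<in> A"
      using C(1) \<open>C \<subseteq> A\<close> unfolding A_def by blast
  qed
  then obtain M where M: "M \<in> A" and maximal: "\<forall>X\<in>A. M \<subseteq> X \<longrightarrow> X = M"
    by blast
  have "a \<in> M \<or> Not a \<in> M" if a: "wf a" for a
  proof (rule ccontr)
    assume "\<not> (a \<in> M \<or> Not a \<in> M)"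
    then have "insert a M \<notin> A" and "insert (Not a) M \<notin> A"
      using maximal by blast+
    then have "derives M (Imp a Bot)" and "derives M (Imp (Not a) Bot)"
      using M a unfolding A_def by (auto intro: derives_insert_imp)
    then have "derives M Bot"
      by (rule derives_by_taut2) auto
    with M show False
      unfolding A_def by blast
  qed
  then show ?thesis
    using M unfolding A_def MCS_def by blast
qed

lemma cond_class_if_lits_subset:
  assumes G: "MCS G" and M: "MCS M" and lits: "{c \<in> G. is_lit c} \<subseteq> M"
  shows "M \<in> cond_class G"
  unfolding cond_class_def cond_equiv_def
proof (intro CollectI conjI M allI iffI)
  fix a b assume ab: "Cond a b \<in> G"
  with lits MCS_wf[OF G ab] show "Cond a b \<in> M"
    unfolding is_lit_def by auto
next
  fix a b assume ab: "Cond a b \<in> M"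
  show "Cond a b \<in> G"
  proof (rule ccontr)
    assume "Cond a b \<notin> G"
    then have "Not (Cond a b) \<in> G"
      using G MCS_wf[OF M ab] unfolding MCS_def by blast
    then have "Not (Cond a b) \<in> M"
      using lits MCS_wf[OF M ab] unfolding is_lit_def by auto
    with M ab show False
      by (rule MCS_not_both)
  qed
qed

text \<open>S5F, read in a maximal consistent set: whatever its conditional literals derive is
  necessary.\<close>

lemma Box_if_lits_derive:
  assumes G: "MCS G" and "is_prop \<chi>" and "derives {c \<in> G. is_lit c} \<chi>"
  shows "Box \<chi> \<in> G"
proof -
  obtain xs where xs: "set xs \<subseteq> {c \<in> G. is_lit c}" "\<turnstile> imps xs \<chi>"
    using assms(3) unfolding derives_def by blast
  \<comment> \<open>S5F needs a nonempty list of literals; the theorem Bot \<leadsto> Bot pads it.\<close>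
  let ?ls = "Cond Bot Bot # xs"
  have "\<turnstile> imps ?ls \<chi>"
    using derivable_imp_wf[OF xs(2)] by (intro derivable_by_taut[OF xs(2)]) (auto simp: wf_imps eval_imps)
  then have "\<turnstile> imps ?ls (Box \<chi>)"
    using xs(1) assms(2) by (intro S5F_imps) (auto simp: is_lit_def)
  moreover have "set ?ls \<subseteq> G"
    using xs(1) MCS_derivable_mem[OF G derivable.refl[of Bot]] by auto
  ultimately have "derives G (Box \<chi>)"
    unfolding derives_def by blast
  with G show ?thesis
    by (rule MCS_derives_mem)
qed

lemma Box_mono:
  assumes G: "MCS G" and "is_prop \<psi>" and "is_prop \<chi>" and "Box \<psi> \<in> G"
    and "\<And>v. eval v \<psi> \<Longrightarrow> eval v \<chi>"
  shows "Box \<chi> \<in> G"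
proof (rule Box_if_lits_derive[OF G assms(3)])
  have "derives {c \<in> G. is_lit c} (Box \<psi>)"
    using assms(2,4) is_prop_imp_wf by (intro derives_mem) (auto simp: is_lit_def)
  moreover have "derives {c \<in> G. is_lit c} (Imp (Box \<psi>) (Not (Not \<psi>)))"
    using assms(2) by (intro derives_derivable derivable.bot) simp
  ultimately show "derives {c \<in> G. is_lit c} \<chi>"
    by (rule derives_by_taut2) (use assms(3,5) is_prop_imp_wf in auto)
qed

lemma Box_if_valid_in_cond_class:
  assumes G: "MCS G" and \<chi>: "is_prop \<chi>" and valid: "\<forall>\<Omega>\<in>cond_class G. \<chi> \<in> \<Omega>"
  shows "Box \<chi> \<in> G"
proof (cases "derives {c \<in> G. is_lit c} \<chi>")
  case True
  with G \<chi> show ?thesis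
    by (rule Box_if_lits_derive)
next
  case False
  let ?H = "insert (Not \<chi>) {c \<in> G. is_lit c}"
  have "\<not> derives ?H Bot"
  proof
    assume "derives ?H Bot"
    then have "derives {c \<in> G. is_lit c} (Imp (Not \<chi>) Bot)"
      using \<chi> is_prop_imp_wf by (intro derives_insert_imp) auto
    then have "derives {c \<in> G. is_lit c} \<chi>"
      by (rule derives_by_taut) (use \<chi> is_prop_imp_wf in auto)
    with False show False ..
  qed
  moreover have "?H \<subseteq> {a. wf a}"
    using \<chi> is_prop_imp_wf is_lit_imp_wf by auto
  ultimately obtain M where M: "MCS M" "?H \<subseteq> M"
    using lindenbaum by blast
  then have "\<chi> \<in> M"
    using valid cond_class_if_lits_subset[OF G M(1)] by blast
  with M show ?thesis
    using MCS_not_both by blast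
qed

lemma Cond_to_weaker_antecedent:
  assumes G: "MCS G" and "is_prop \<delta>" and "is_prop \<phi>" and "is_prop \<chi>"
    and "Box (Imp \<delta> \<phi>) \<in> G" and "Cond \<delta> \<chi> \<in> G"
  shows "Cond \<phi> (Imp \<delta> \<chi>) \<in> G"
proof -
  have box: "Box (Iff (And \<phi> \<delta>) \<delta>) \<in> G"
    by (rule Box_mono[OF G, of "Imp \<delta> \<phi>"]) (use assms in auto)
  have lle: "\<turnstile> Imp (Box (Iff (And \<phi> \<delta>) \<delta>)) (Iff (Cond (And \<phi> \<delta>) \<chi>) (Cond \<delta> \<chi>))"
    using assms(2-4) by (intro derivable.lle) simp_all
  have shift: "\<turnstile> Imp (Cond (And \<phi> \<delta>) \<chi>) (Cond \<phi> (Imp \<delta> \<chi>))"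
    using assms(2-4) by (intro derivable.shift)
  have "Cond (And \<phi> \<delta>) \<chi> \<in> G"
    using MCS_derivable_mp[OF G lle box] assms(6) by (rule MCS_Iff_mem[OF G])
  then show ?thesis
    by (rule MCS_derivable_mp[OF G shift])
qed

lemma likely_if_Box_Imp:
  assumes G: "MCS G" and D: "MCS D" and "is_prop \<delta>" and "is_prop \<phi>"
    and "Box (Imp \<delta> \<phi>) \<in> G" and "likely G \<phi> D" and "\<delta> \<in> D"
  shows "likely G \<delta> D"
  unfolding likely_def cons_of_def
proof
  fix \<chi> assume "\<chi> \<in> {\<psi>. Cond \<delta> \<psi> \<in> G}"
  then have \<chi>: "Cond \<delta> \<chi> \<in> G"
    by simp
  then have "is_prop \<chi>"
    using MCS_wf[OF G \<chi>] by simp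
  have "Cond \<phi> (Imp \<delta> \<chi>) \<in> G"
    using G assms(3,4) \<open>is_prop \<chi>\<close> assms(5) \<chi> by (rule Cond_to_weaker_antecedent)
  then have "Imp \<delta> \<chi> \<in> D"
    using assms(6) unfolding likely_def cons_of_def by blast
  then show "\<chi> \<in> D"
    using MCS_Imp_iff[OF D is_prop_imp_wf[OF assms(3)] is_prop_imp_wf[OF \<open>is_prop \<chi>\<close>]] assms(7)
    by blast
qed

lemma likely_self_mem: "MCS G \<Longrightarrow> is_prop \<delta> \<Longrightarrow> likely G \<delta> D \<Longrightarrow> \<delta> \<in> D"
  using MCS_derivable_mem[OF _ derivable.refl] unfolding likely_def cons_of_def by blast

text \<open>The index component makes \<succeq> cyclic on {0, 1, 2}, so (\<Omega>, \<phi>, i + 1 mod 3) is strictly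
  above (\<Delta>, \<phi>, i) unless the likelihood clause holds.\<close>

lemma maxel_extent_dominates:
  assumes max: "(D, \<phi>, i) \<in> maxel G (extent G \<delta>)" and "i \<in> {0, 1, 2}" and "is_prop \<phi>"
    and "\<Omega> \<in> cond_class G" and "\<delta> \<in> \<Omega>"
  shows "likely G \<phi> D \<and> \<phi> \<in> \<Omega>"
proof -
  let ?j = "(i + 1) mod 3"
  have above: "(\<Omega>, \<phi>, ?j) \<in> extent G \<delta>"
    using assms unfolding extent_def S_def by auto
  have "pref G (\<Omega>, \<phi>, ?j) (D, \<phi>, i)"
    using assms(2) unfolding pref_def by auto
  then have "pref G (D, \<phi>, i) (\<Omega>, \<phi>, ?j)"
    using max above unfolding maxel_def by blast
  then show ?thesis
    using assms(2) unfolding pref_def by (elim insertE emptyE) simp_all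
qed

lemma maxel_extent_imp_likely:
  assumes G: "MCS G" and "is_prop \<delta>" and "(D, \<phi>, i) \<in> S G"
    and max: "(D, \<phi>, i) \<in> maxel G (extent G \<delta>)"
  shows "likely G \<delta> D"
proof -
  have D: "D \<in> cond_class G" and \<phi>: "is_prop \<phi>" and i: "i \<in> {0, 1, 2}"
    using assms(3) unfolding S_def by auto
  have \<delta>: "\<delta> \<in> D"
    using max unfolding maxel_def extent_def by auto
  have "\<forall>\<Omega>\<in>cond_class G. Imp \<delta> \<phi> \<in> \<Omega>"
    using maxel_extent_dominates[OF max i \<phi>] MCS_Imp_iff assms(2) \<phi> is_prop_imp_wf
    unfolding cond_class_def by blast
  then have "Box (Imp \<delta> \<phi>) \<in> G"
    using G assms(2) \<phi> by (intro Box_if_valid_in_cond_class) auto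
  moreover have "likely G \<phi> D"
    using maxel_extent_dominates[OF max i \<phi> D \<delta>] ..
  ultimately show ?thesis
    using G D assms(2) \<phi> \<delta> likely_if_Box_Imp unfolding cond_class_def by blast
qed

lemma likely_imp_maxel_extent:
  assumes "MCS G" and "is_prop \<delta>" and "D \<in> cond_class G" and "i \<in> {0, 1, 2}"
    and "likely G \<delta> D"
  shows "(D, \<delta>, i) \<in> maxel G (extent G \<delta>)"
proof -
  have "(D, \<delta>, i) \<in> extent G \<delta>"
    using assms likely_self_mem unfolding extent_def S_def by auto
  moreover have "pref G (D, \<delta>, i) y" if "y \<in> extent G \<delta>" for y
    using that assms(5) unfolding extent_def pref_def by auto
  ultimately show ?thesis
    unfolding maxel_def by blast
qed

theorem corollary1:
  fixes \<Gamma> \<Delta> :: "'a fm set" and \<delta> \<phi> :: "'a fm" and i :: nat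
  assumes "MCS \<Gamma>" and "is_prop \<delta>" and "(\<Delta>, \<phi>, i) \<in> S \<Gamma>"
  shows "((\<Delta>, \<phi>, i) \<in> maxel \<Gamma> (extent \<Gamma> \<delta>) \<longrightarrow> likely \<Gamma> \<delta> \<Delta>)
       \<and> (likely \<Gamma> \<delta> \<Delta> \<longrightarrow> (\<Delta>, \<delta>, i) \<in> maxel \<Gamma> (extent \<Gamma> \<delta>))"
proof (intro conjI impI)
  show "likely \<Gamma> \<delta> \<Delta>" if "(\<Delta>, \<phi>, i) \<in> maxel \<Gamma> (extent \<Gamma> \<delta>)"
    using assms that by (rule maxel_extent_imp_likely)
  show "(\<Delta>, \<delta>, i) \<in> maxel \<Gamma> (extent \<Gamma> \<delta>)" if "likely \<Gamma> \<delta> \<Delta>"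
    using assms(3) by (intro likely_imp_maxel_extent[OF assms(1,2) _ _ that]) (auto simp: S_def)
qed

end
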